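(* Let $G(n,n_1,n_2,n_3,p_1,p_2,p_3)$ be a three-layer stochastic block model network satisfying the standing assumptions below. Fix any one of the three layers as target layer, and apply ReduceWeight to all communities of the other two layers. Then the (expected, weighted) modularity of the target layer's partition in the resulting weighted graph is strictly larger than in the original graph.
   Context: Multi-layer stochastic block model $G(n,n_1,\dots,n_L,p_1,\dots,p_L)$: a random graph on $n$ nodes with $L$ layers. For each layer $l$ the nodes are partitioned into $n_l$ planted communities of size $s_l=n/n_l$; independently for each layer, each pair of distinct nodes in a common community of layer $l$ receives an edge from layer $l$ with probability $p_l$; the graph is the simple union of all generated edges. The partitions of different layers are independent: for any $k\ge2$ distinct layers and one community from each, their intersection has $n/(n_{l_1}\cdots n_{l_k})$ nodes (in expectation). Standing assumptions: $n_l\ge4$, $p_l\in[0.05,1]$ for every layer, and $n\ge2\prod_l n_l$. Retention probability of a layer $l$: for a community $i$ of layer $l$ with size $s_l$, $e^i_{ll}$ internal edges and $e^i_{lout}$ outgoing edges, $\widehat{p^i_l}=e^i_{ll}/(\tfrac12 s_l(s_l-1))$, $\widehat{q^i_l}=e^i_{lout}/(s_l(n-s_l))$, $q^i_l=\widehat{q^i_l}/\widehat{p^i_l}$ (computed from expected counts, giving a common value $q_l$ for the layer). ReduceWeight on layer $l$: viewing the graph as weighted, multiply the weight of every internal edge of every community of layer $l$ by $q_l$ (so an edge internal to communities of both reduced layers $a,b$ has its weight multiplied by $q_aq_b$). Weighted modularity of a layer: as $Q_l=\sum_i\big(\frac{e^i_{ll}}{e}-(\frac{d^i_l}{2e})^2\big)$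 with $d^i_l=2e^i_{ll}+e^i_{lout}$, where $e^i_{ll}$, $e^i_{lout}$, $e$ are the (expected) sums of edge weights of internal edges, outgoing edges and all edges. *)

theory Defs
  imports Complex_Main
begin

text \<open>Layers are indexed by the finite
set Ls (here {..<3}); nc l is the number of communities n_l of layer l; p l is p_l.
A pair of distinct nodes has "type" T = the set of layers in which the two nodes lie
in a common community. All counts are the paper's expected counts (real numbers).\<close>

text \<open>Expected number of other nodes sharing a given node's community in every layer of S
(the intersection of its communities has n / prod n_l nodes, minus the node itself).\<close>
definition share_atleast :: "nat \<Rightarrow> (nat \<Rightarrow> nat) \<Rightarrow> nat set \<Rightarrow> real" where
  "share_atleast n nc S = real n / (\<Prod>l\<in>S. real (nc l)) - 1"

text \<open>Expected number of other nodes whose pair with a given node has type exactly T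
(inclusion-exclusion).\<close>
definition share_exact :: "nat set \<Rightarrow> nat \<Rightarrow> (nat \<Rightarrow> nat) \<Rightarrow> nat set \<Rightarrow> real" where
  "share_exact Ls n nc T =
     (\<Sum>S\<in>{S. T \<subseteq> S \<and> S \<subseteq> Ls}. (-1) ^ card (S - T) * share_atleast n nc S)"

definition edge_prob :: "(nat \<Rightarrow> real) \<Rightarrow> nat set \<Rightarrow> real" where
  "edge_prob p T = 1 - (\<Prod>l\<in>T. 1 - p l)"

text \<open>w T is the weight given to an edge whose pair has type T.
Expected internal edge weight e^i_ll of a community i of layer t (size s_t = n/n_t).\<close>
definition internal_weight ::
  "nat set \<Rightarrow> nat \<Rightarrow> (nat \<Rightarrow> nat) \<Rightarrow> (nat \<Rightarrow> real) \<Rightarrow> (nat set \<Rightarrow> real) \<Rightarrow> nat \<Rightarrow> real" where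
  "internal_weight Ls n nc p w t =
     real n / real (nc t) / 2 *
       (\<Sum>T\<in>{T. T \<subseteq> Ls \<and> t \<in> T}. share_exact Ls n nc T * edge_prob p T * w T)"

definition outgoing_weight ::
  "nat set \<Rightarrow> nat \<Rightarrow> (nat \<Rightarrow> nat) \<Rightarrow> (nat \<Rightarrow> real) \<Rightarrow> (nat set \<Rightarrow> real) \<Rightarrow> nat \<Rightarrow> real" where
  "outgoing_weight Ls n nc p w t =
     real n / real (nc t) *
       (\<Sum>T\<in>{T. T \<subseteq> Ls \<and> t \<notin> T}. share_exact Ls n nc T * edge_prob p T * w T)"

definition total_weight ::
  "nat set \<Rightarrow> nat \<Rightarrow> (nat \<Rightarrow> nat) \<Rightarrow> (nat \<Rightarrow> real) \<Rightarrow> (nat set \<Rightarrow> real) \<Rightarrow> real" where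
  "total_weight Ls n nc p w =
     real n / 2 * (\<Sum>T\<in>Pow Ls. share_exact Ls n nc T * edge_prob p T * w T)"

text \<open>Weighted modularity Q_t of the partition of layer t (sum over its n_t communities,
which all have the same expected counts).\<close>
definition layer_modularity ::
  "nat set \<Rightarrow> nat \<Rightarrow> (nat \<Rightarrow> nat) \<Rightarrow> (nat \<Rightarrow> real) \<Rightarrow> (nat set \<Rightarrow> real) \<Rightarrow> nat \<Rightarrow> real" where
  "layer_modularity Ls n nc p w t =
     (\<Sum>i<nc t.
        internal_weight Ls n nc p w t / total_weight Ls n nc p w
        - ((2 * internal_weight Ls n nc p w t + outgoing_weight Ls n nc p w t)
             / (2 * total_weight Ls n nc p w))\<^sup>2)"

definition retention :: "nat set \<Rightarrow> nat \<Rightarrow> (nat \<Rightarrow> nat) \<Rightarrow> (nat \<Rightarrow> real) \<Rightarrow> nat \<Rightarrow> real" where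
  "retention Ls n nc p l =
     (let s = real n / real (nc l);
          phat = internal_weight Ls n nc p (\<lambda>_. 1) l / (s * (s - 1) / 2);
          qhat = outgoing_weight Ls n nc p (\<lambda>_. 1) l / (s * (real n - s))
      in qhat / phat)"

text \<open>Edge weights after ReduceWeight on every layer in R: an edge of pair type T is
multiplied by q_l for each reduced layer l in which it is internal.\<close>
definition reduced_weight ::
  "nat set \<Rightarrow> nat \<Rightarrow> (nat \<Rightarrow> nat) \<Rightarrow> (nat \<Rightarrow> real) \<Rightarrow> nat set \<Rightarrow> nat set \<Rightarrow> real" where
  "reduced_weight Ls n nc p R T = (\<Prod>l\<in>T \<inter> R. retention Ls n nc p l)"

end

theory Submission
  imports Defs
begin

text \<open>Summing the expected counts over the pair types T, using the independence of the
layers, the modularity of layer t becomes B / (B + C) - 1 / n_t, where B and C are the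
expected internal and outgoing edge weight per node; so it suffices that ReduceWeight raises
the internal share B / (B + C). Every retention probability is below 1: a pair inside a
community of l is an edge with probability about p_l + (1 - p_l) r_l, where r_l is the edge
probability of a pair separated by l. Expanding the difference of the cross products over
pairs of types, each term is nonnegative except the one comparing the types {t, m} and
{t, k}, and that one is dominated by the term comparing {t} with {m, k}.\<close>

lemma sum_subsets_between:
  assumes "finite Ls" "T \<subseteq> Ls"
  shows "(\<Sum>S\<in>{S. T \<subseteq> S \<and> S \<subseteq> Ls}. f S) = (\<Sum>U\<in>Pow (Ls - T). f (T \<union> U))"
  by (rule sum.reindex_bij_witness[where j = "\<lambda>S. S - T" and i = "\<lambda>U. T \<union> U"])
    (use assms in \<open>auto simp: Un_absorb1\<close>)

lemma sum_subsets_containing: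
  assumes "finite Ls" "l \<in> Ls"
  shows "(\<Sum>T\<in>{T. T \<subseteq> Ls \<and> l \<in> T}. f T) = (\<Sum>U\<in>Pow (Ls - {l}). f (insert l U))"
proof -
  have "{T. T \<subseteq> Ls \<and> l \<in> T} = {S. {l} \<subseteq> S \<and> S \<subseteq> Ls}" by blast
  then show ?thesis using sum_subsets_between[of Ls "{l}" f] assms by simp
qed

lemma sum_Pow_doubleton:
  assumes "a \<noteq> b"
  shows "(\<Sum>U\<in>Pow {a, b}. f U) = f {} + f {a} + f {b} + f {a, b}"
proof -
  have "Pow {a, b} = {{}, {a}, {b}, {a, b}}" by blast
  then show ?thesis using assms by (simp add: insert_commute add.assoc)
qed

lemma share_exact_eq:
  assumes "finite Ls" "T \<subseteq> Ls"
  shows "share_exact Ls n nc T =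
    real n * (\<Prod>l\<in>T. 1 / real (nc l)) * (\<Prod>l\<in>Ls - T. 1 - 1 / real (nc l))
      - (if T = Ls then 1 else 0)"
proof -
  let ?u = "\<lambda>l. 1 / real (nc l)"
  have fin: "finite T" "finite (Ls - T)" using assms finite_subset by auto
  have atleast: "share_atleast n nc (T \<union> U) = real n * prod ?u T * prod ?u U - 1"
    if "U \<subseteq> Ls - T" for U
  proof -
    have "T \<inter> U = {}" "finite U" using that fin finite_subset by auto
    then show ?thesis
      unfolding share_atleast_def using fin
      by (simp add: prod.union_disjoint prod_inversef[symmetric] comp_def divide_inverse)
  qed
  have "share_exact Ls n nc T =
      (\<Sum>U\<in>Pow (Ls - T). (-1) ^ card U * (real n * prod ?u T * prod ?u U - 1))"
    unfolding share_exact_def sum_subsets_between[OF assms]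
  proof (rule sum.cong)
    fix U assume "U \<in> Pow (Ls - T)"
    then have "T \<union> U - T = U" by auto
    then show "(-1) ^ card (T \<union> U - T) * share_atleast n nc (T \<union> U) =
        (-1) ^ card U * (real n * prod ?u T * prod ?u U - 1)"
      using atleast \<open>U \<in> Pow (Ls - T)\<close> by simp
  qed simp
  also have "\<dots> = real n * prod ?u T * (\<Sum>U\<in>Pow (Ls - T). (-1) ^ card U * prod ?u U)
      - (\<Sum>U\<in>Pow (Ls - T). (-1) ^ card U * (\<Prod>l\<in>U. 1))"
    by (simp add: algebra_simps sum_subtractf sum_distrib_left)
  also have "\<dots> = real n * prod ?u T * (\<Prod>l\<in>Ls - T. 1 - ?u l) - (\<Prod>l\<in>Ls - T. 1 - 1)"
    unfolding prod_diff_conv_sum[OF fin(2)] by simp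
  finally show ?thesis using assms fin by auto
qed

lemma sum_Pow_binomial:
  fixes u y :: "'a \<Rightarrow> 'b::comm_ring_1"
  assumes "finite A"
  shows "(\<Sum>B\<in>Pow A. (\<Prod>a\<in>B. u a) * (\<Prod>a\<in>A - B. 1 - u a) * (\<Prod>a\<in>B. y a))
    = (\<Prod>a\<in>A. 1 - u a * (1 - y a))"
proof -
  have "(\<Prod>a\<in>A. 1 - u a * (1 - y a)) = (\<Prod>a\<in>A. u a * y a + (1 - u a))"
    by (simp add: algebra_simps)
  also have "\<dots> = (\<Sum>B\<in>Pow A. (\<Prod>a\<in>B. u a * y a) * (\<Prod>a\<in>A - B. 1 - u a))"
    by (rule prod_add[OF assms])
  finally show ?thesis by (simp add: prod.distrib mult_ac)
qed

lemma outgoing_weight_unweighted: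
  fixes Ls :: "nat set" and n :: nat and nc :: "nat \<Rightarrow> nat"
  assumes "finite Ls" "l \<in> Ls"
  defines "s \<equiv> real n / real (nc l)"
  shows "outgoing_weight Ls n nc p (\<lambda>_. 1) l
    = s * (real n - s) * (1 - (\<Prod>j\<in>Ls - {l}. 1 - p j / real (nc j)))"
proof -
  let ?u = "\<lambda>j. 1 / real (nc j)" and ?D = "Ls - {l}"
  let ?c = "\<lambda>T. (\<Prod>j\<in>T. ?u j) * (\<Prod>j\<in>?D - T. 1 - ?u j)"
  have fin: "finite ?D" using assms by simp
  have terms: "share_exact Ls n nc T * edge_prob p T * 1
      = real n * (1 - ?u l) * (?c T * (\<Prod>j\<in>T. 1) - ?c T * (\<Prod>j\<in>T. 1 - p j))"
    if "T \<in> Pow ?D" for T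
  proof -
    have "T \<subseteq> Ls" "Ls - T = insert l (?D - T)" "T \<noteq> Ls" "finite (?D - T)"
      using that assms by auto
    then show ?thesis
      using assms by (simp add: share_exact_eq edge_prob_def algebra_simps diff_divide_distrib)
  qed
  have "{T. T \<subseteq> Ls \<and> l \<notin> T} = Pow ?D" by blast
  then have "(\<Sum>T\<in>{T. T \<subseteq> Ls \<and> l \<notin> T}. share_exact Ls n nc T * edge_prob p T * 1)
      = (\<Sum>T\<in>Pow ?D. real n * (1 - ?u l) * (?c T * (\<Prod>j\<in>T. 1) - ?c T * (\<Prod>j\<in>T. 1 - p j)))"
    using terms by (simp only: cong: sum.cong)
  also have "\<dots> = real n * (1 - ?u l)
      * ((\<Sum>T\<in>Pow ?D. ?c T * (\<Prod>j\<in>T. 1)) - (\<Sum>T\<in>Pow ?D. ?c T * (\<Prod>j\<in>T. 1 - p j)))"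
    by (simp only: right_diff_distrib sum_distrib_left sum_subtractf)
  also have "\<dots> = real n * (1 - ?u l)
      * ((\<Prod>j\<in>?D. 1 - ?u j * (1 - 1)) - (\<Prod>j\<in>?D. 1 - ?u j * (1 - (1 - p j))))"
    by (simp only: sum_Pow_binomial[OF fin])
  finally have "(\<Sum>T\<in>{T. T \<subseteq> Ls \<and> l \<notin> T}. share_exact Ls n nc T * edge_prob p T * 1)
      = (real n - s) * (1 - (\<Prod>j\<in>?D. 1 - p j / real (nc j)))"
    by (simp add: s_def algebra_simps)
  then show ?thesis
    unfolding outgoing_weight_def s_def by simp
qed

lemma internal_weight_unweighted:
  fixes Ls :: "nat set" and n :: nat and nc :: "nat \<Rightarrow> nat"
  assumes "finite Ls" "l \<in> Ls"
  defines "s \<equiv> real n / real (nc l)"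
  shows "internal_weight Ls n nc p (\<lambda>_. 1) l
    = s / 2 * (s * (1 - (1 - p l) * (\<Prod>j\<in>Ls - {l}. 1 - p j / real (nc j))) - edge_prob p Ls)"
proof -
  let ?u = "\<lambda>j. 1 / real (nc j)" and ?D = "Ls - {l}"
  let ?c = "\<lambda>T. (\<Prod>j\<in>T. ?u j) * (\<Prod>j\<in>?D - T. 1 - ?u j)"
  have fin: "finite ?D" using assms by simp
  have terms: "share_exact Ls n nc (insert l U) * edge_prob p (insert l U) * 1
      = real n * ?u l * (?c U * (\<Prod>j\<in>U. 1) - (1 - p l) * (?c U * (\<Prod>j\<in>U. 1 - p j)))
        - (if U = ?D then edge_prob p Ls else 0)"
    if "U \<in> Pow ?D" for U
  proof -
    have U: "insert l U \<subseteq> Ls" "Ls - insert l U = ?D - U" "(insert l U = Ls) = (U = ?D)"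
      "l \<notin> U" "finite U"
      using that assms finite_subset[OF _ fin] by auto
    then have se: "share_exact Ls n nc (insert l U) = real n * ?u l * ?c U - (if U = ?D then 1 else 0)"
      using assms by (simp add: share_exact_eq)
    have ep: "edge_prob p (insert l U) = 1 - (1 - p l) * (\<Prod>j\<in>U. 1 - p j)"
      using U by (simp add: edge_prob_def)
    have "share_exact Ls n nc (insert l U) * edge_prob p (insert l U) * 1
        = real n * ?u l * ?c U * edge_prob p (insert l U)
          - (if U = ?D then edge_prob p (insert l U) else 0)"
      by (simp add: se left_diff_distrib)
    also have "\<dots> = real n * ?u l * ?c U * edge_prob p (insert l U)
          - (if U = ?D then edge_prob p Ls else 0)"
      using assms by (simp add: insert_absorb)
    also have "\<dots> = real n * ?u l * (?c U * (\<Prod>j\<in>U. 1) - (1 - p l) * (?c U * (\<Prod>j\<in>U. 1 - p j)))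
        - (if U = ?D then edge_prob p Ls else 0)"
      by (simp add: ep algebra_simps add_divide_distrib diff_divide_distrib)
    finally show ?thesis .
  qed
  have "(\<Sum>T\<in>{T. T \<subseteq> Ls \<and> l \<in> T}. share_exact Ls n nc T * edge_prob p T * 1)
      = (\<Sum>U\<in>Pow ?D. real n * ?u l * (?c U * (\<Prod>j\<in>U. 1) - (1 - p l) * (?c U * (\<Prod>j\<in>U. 1 - p j)))
        - (if U = ?D then edge_prob p Ls else 0))"
    using terms by (simp add: sum_subsets_containing[OF assms(1,2)])
  also have "\<dots> = real n * ?u l
      * ((\<Sum>U\<in>Pow ?D. ?c U * (\<Prod>j\<in>U. 1)) - (1 - p l) * (\<Sum>U\<in>Pow ?D. ?c U * (\<Prod>j\<in>U. 1 - p j)))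
      - edge_prob p Ls"
    using fin
    by (simp only: right_diff_distrib sum_distrib_left sum_subtractf sum.delta finite_Pow_iff) simp
  also have "\<dots> = real n * ?u l
      * ((\<Prod>j\<in>?D. 1 - ?u j * (1 - 1)) - (1 - p l) * (\<Prod>j\<in>?D. 1 - ?u j * (1 - (1 - p j))))
      - edge_prob p Ls"
    by (simp only: sum_Pow_binomial[OF fin])
  finally have "(\<Sum>T\<in>{T. T \<subseteq> Ls \<and> l \<in> T}. share_exact Ls n nc T * edge_prob p T * 1)
      = s * (1 - (1 - p l) * (\<Prod>j\<in>?D. 1 - p j / real (nc j))) - edge_prob p Ls"
    by (simp add: s_def algebra_simps)
  then show ?thesis
    unfolding internal_weight_def s_def by simp
qed

lemma retention_eq:
  fixes Ls :: "nat set" and n :: nat and nc :: "nat \<Rightarrow> nat" and p :: "nat \<Rightarrow> real" and l :: nat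
  defines "s \<equiv> real n / real (nc l)"
    and "P \<equiv> (\<Prod>j\<in>Ls - {l}. 1 - p j / real (nc j))"
  assumes "finite Ls" "l \<in> Ls" "0 < s" "s < real n"
  shows "retention Ls n nc p l
    = (1 - P) / ((s * (1 - (1 - p l) * P) - edge_prob p Ls) / (s - 1))"
proof -
  have "s * (real n - s) * (1 - P) / (s * (real n - s)) = 1 - P"
    using assms(5,6) by simp
  moreover have "s / 2 * In / (s * (s - 1) / 2) = In / (s - 1)" for In
    using assms(5) by simp
  ultimately show ?thesis
    unfolding retention_def Let_def
      outgoing_weight_unweighted[OF assms(3,4)] internal_weight_unweighted[OF assms(3,4)]
      s_def[symmetric] P_def[symmetric]
    by simp
qed

lemma retention_bounds:
  fixes Ls :: "nat set" and n :: nat and nc :: "nat \<Rightarrow> nat" and p :: "nat \<Rightarrow> real"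
  assumes Ls: "finite Ls" "l \<in> Ls"
    and nc: "\<forall>j\<in>Ls. 1 < nc j" and p: "\<forall>j\<in>Ls. 0 \<le> p j \<and> p j \<le> 1"
    and large: "1 < real n / real (nc l) * p l"
  shows "0 \<le> retention Ls n nc p l \<and> retention Ls n nc p l < 1"
proof -
  define s where "s = real n / real (nc l)"
  define P where "P = (\<Prod>j\<in>Ls - {l}. 1 - p j / real (nc j))"
  define In where "In = s * (1 - (1 - p l) * P) - edge_prob p Ls"
  have factor: "0 < 1 - p j / real (nc j) \<and> 1 - p j / real (nc j) \<le> 1" if "j \<in> Ls" for j
  proof -
    have "p j / real (nc j) \<le> 1 / real (nc j)"
      using p nc that by (simp add: divide_right_mono)
    also have "\<dots> < 1" using nc that by (simp add: divide_less_eq)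
    finally show ?thesis using p that by simp
  qed
  have P: "0 < P" "P \<le> 1"
    unfolding P_def using factor by (auto intro!: prod_pos prod_le_1 simp: less_imp_le)
  have pl: "0 \<le> p l" "p l \<le> 1" using p Ls by auto
  have s: "1 < s"
  proof (rule ccontr)
    assume "\<not> 1 < s"
    moreover have "0 \<le> s" by (simp add: s_def)
    ultimately have "s * p l \<le> 1" using pl by (simp add: mult_le_one)
    then show False using large by (simp add: s_def)
  qed
  have "real n - s = real n * (1 - 1 / real (nc l))" by (simp add: s_def algebra_simps)
  moreover have "real n > 0" using s by (cases n) (auto simp: s_def)
  moreover have "1 / real (nc l) < 1" using nc Ls by (simp add: divide_less_eq)
  ultimately have "0 < real n - s" by simp
  then have ret: "retention Ls n nc p l = (1 - P) / (In / (s - 1))"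
    using retention_eq[OF Ls] s unfolding s_def P_def In_def by simp
  have "edge_prob p Ls \<le> 1"
    unfolding edge_prob_def using p by (simp add: prod_nonneg)
  moreover have "In - (s - 1) * (1 - P) = (s * p l - 1) * P + (1 - edge_prob p Ls)"
    by (simp add: In_def algebra_simps)
  moreover have "(s * p l - 1) * P > 0" using large P by (simp add: s_def)
  ultimately have "(s - 1) * (1 - P) < In" by linarith
  then have "1 - P < In / (s - 1)" using s by (simp add: field_simps)
  moreover have "0 \<le> 1 - P" using P by simp
  ultimately show ?thesis
    unfolding ret by (metis divide_less_eq_1_pos divide_nonneg_pos le_less_trans)
qed

lemma layer_modularity_eq:
  fixes Ls :: "nat set" and n :: nat and nc :: "nat \<Rightarrow> nat" and p w :: "_ \<Rightarrow> real" and t :: nat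
  defines "B \<equiv> (\<Sum>T\<in>{T. T \<subseteq> Ls \<and> t \<in> T}. share_exact Ls n nc T * edge_prob p T * w T)"
    and "C \<equiv> (\<Sum>T\<in>{T. T \<subseteq> Ls \<and> t \<notin> T}. share_exact Ls n nc T * edge_prob p T * w T)"
  assumes "finite Ls" "0 < nc t" "0 < n" "B + C \<noteq> 0"
  shows "layer_modularity Ls n nc p w t = B / (B + C) - 1 / real (nc t)"
proof -
  define N where "N = real n"
  define a where "a = real (nc t)"
  have pos: "0 < N" "0 < a" using assms by (simp_all add: N_def a_def)
  have "Pow Ls = {T. T \<subseteq> Ls \<and> t \<in> T} \<union> {T. T \<subseteq> Ls \<and> t \<notin> T}" by blast
  then have total: "total_weight Ls n nc p w = N / 2 * (B + C)"
    unfolding total_weight_def B_def C_def N_def using assms(3)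
    by (simp add: sum.union_disjoint[symmetric] disjoint_iff)
  have internal: "internal_weight Ls n nc p w t = N / a / 2 * B"
    unfolding internal_weight_def B_def N_def a_def ..
  have outgoing: "outgoing_weight Ls n nc p w t = N / a * C"
    unfolding outgoing_weight_def C_def N_def a_def ..
  have fraction: "(N / a / 2 * B) / (N / 2 * (B + C)) = B / (B + C) / a"
    using pos assms(6) by (simp add: divide_simps)
  have degree: "(2 * (N / a / 2 * B) + N / a * C) / (2 * (N / 2 * (B + C))) = 1 / a"
  proof -
    have "2 * (N / a / 2 * B) + N / a * C = (B + C) * N / a"
      by (simp add: algebra_simps add_divide_distrib)
    then show ?thesis using pos assms(6) by simp
  qed
  have "layer_modularity Ls n nc p w t = a * (B / (B + C) / a - (1 / a)\<^sup>2)"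
    unfolding layer_modularity_def total internal outgoing fraction degree by (simp add: a_def)
  also have "\<dots> = B / (B + C) - 1 / a"
    using pos by (simp add: right_diff_distrib power2_eq_square)
  finally show ?thesis by (simp add: a_def)
qed

lemma diff_mult_diff_less:
  fixes qm qk pm pk e :: real
  assumes "0 \<le> qm" "qm < 1" "0 \<le> qk" "qk < 1" "0 < pm" "pm \<le> e" "0 < pk" "pk \<le> e"
  shows "(qm - qk) * (pm - pk) < e * (1 - qm * qk)"
proof -
  have ordered: "(a - b) * (pa - pb) < e * (1 - a * b)"
    if "0 \<le> b" "b \<le> a" "a < 1" "0 < pa" "pa \<le> e" "0 \<le> pb" for a b pa pb :: real
  proof -
    have "(a - b) * (pa - pb) \<le> (a - b) * pa" using that by (simp add: mult_left_mono)
    also have "\<dots> < (1 - b) * pa" using that by (simp add: mult_strict_right_mono)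
    also have "\<dots> \<le> (1 - a * b) * e"
    proof -
      have "a * b \<le> b" using that by (simp add: mult_left_le_one_le)
      then show ?thesis using that by (intro mult_mono) auto
    qed
    finally show ?thesis by (simp add: mult.commute)
  qed
  show ?thesis
  proof (cases "qk \<le> qm")
    case True
    then show ?thesis using ordered[of qk qm pm pk] assms by simp
  next
    case False
    then have "(qk - qm) * (pk - pm) < e * (1 - qk * qm)"
      using ordered[of qm qk pk pm] assms by simp
    then show ?thesis by (simp add: algebra_simps)
  qed
qed

(* c, a, b stand for 1/n_t, 1/n_m, 1/n_k and xT for the expected number of nodes whose pair
   with a given node has type T (the -1 in xtmk excludes the node itself). *)
lemma internal_share_increases:
  fixes N c a b pt pm pk qm qk xt xtm xtk xtmk xm xk xmk :: real
  assumes N: "1 \<le> N * c * a * b"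
    and u: "0 < c" "c < 1" "0 < a" "a < 1" "0 < b" "b < 1"
    and p: "0 < pt" "pt \<le> 1" "0 < pm" "pm \<le> 1" "0 < pk" "pk \<le> 1"
    and q: "0 \<le> qm" "qm < 1" "0 \<le> qk" "qk < 1"
  defines "etm \<equiv> 1 - (1 - pt) * (1 - pm)" and "etk \<equiv> 1 - (1 - pt) * (1 - pk)"
    and "emk \<equiv> 1 - (1 - pm) * (1 - pk)" and "etmk \<equiv> 1 - (1 - pt) * ((1 - pm) * (1 - pk))"
  assumes xt_eq: "xt = N * c * (1 - a) * (1 - b) * pt"
    and xtm_eq: "xtm = N * c * a * (1 - b) * etm"
    and xtk_eq: "xtk = N * c * (1 - a) * b * etk"
    and xtmk_eq: "xtmk = (N * c * a * b - 1) * etmk"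
    and xm_eq: "xm = N * (1 - c) * a * (1 - b) * pm"
    and xk_eq: "xk = N * (1 - c) * (1 - a) * b * pk"
    and xmk_eq: "xmk = N * (1 - c) * a * b * emk"
  defines "B \<equiv> xt + xtm + xtk + xtmk" and "C \<equiv> xm + xk + xmk"
    and "Bq \<equiv> xt + xtm * qm + xtk * qk + xtmk * (qm * qk)"
    and "Cq \<equiv> xm * qm + xk * qk + xmk * (qm * qk)"
  shows "0 < B + C" "0 < Bq + Cq" "B / (B + C) < Bq / (Bq + Cq)"
proof -
  have "0 < N"
  proof (rule ccontr)
    assume "\<not> 0 < N"
    then have "N * c * a * b \<le> 0" using u by (simp add: mult_nonpos_nonneg)
    then show False using N by simp
  qed
  have "(1 - pt) * (1 - pm) \<le> 1" "(1 - pt) * (1 - pk) \<le> 1" "(1 - pt) * (1 - pm) * (1 - pk) \<le> 1"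
    using p by (simp_all add: mult_le_one)
  then have e: "0 \<le> etm" "0 \<le> etk" "0 \<le> etmk"
    unfolding etm_def etk_def etmk_def by simp_all
  have "emk = pm + (1 - pm) * pk" unfolding emk_def by (simp add: algebra_simps)
  then have emk_m: "pm \<le> emk" using p by simp
  have "emk = pk + pm * (1 - pk)" unfolding emk_def by (simp add: algebra_simps)
  then have emk_k: "pk \<le> emk" using p by simp
  note emk = emk_m emk_k
  have x: "0 < xt" "0 \<le> xtm" "0 \<le> xtk" "0 \<le> xtmk" "0 \<le> xm" "0 \<le> xk" "0 \<le> xmk"
    unfolding xt_eq xtm_eq xtk_eq xtmk_eq xm_eq xk_eq xmk_eq
    using \<open>0 < N\<close> N u p e emk by auto
  show "0 < B + C" "0 < Bq + Cq"
    unfolding B_def C_def Bq_def Cq_def using x q by (simp_all add: add_pos_nonneg)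
  define K where "K = N * N * c * (1 - c) * a * (1 - a) * b * (1 - b) * pt"
  have "0 < K" unfolding K_def using \<open>0 < N\<close> u p by simp
  have mixing: "xt * xmk * (1 - qm * qk) + (qm - qk) * (xtm * xk - xtk * xm)
      = K * (emk * (1 - qm * qk) - (qm - qk) * (pm - pk))"
    unfolding K_def xt_eq xmk_eq xtm_eq xk_eq xtk_eq xm_eq etm_def etk_def
    by (simp add: algebra_simps)
  have "(qm - qk) * (pm - pk) < emk * (1 - qm * qk)"
    using diff_mult_diff_less q p emk by simp
  then have mixing_pos: "0 < xt * xmk * (1 - qm * qk) + (qm - qk) * (xtm * xk - xtk * xm)"
    unfolding mixing using \<open>0 < K\<close> by simp
  have "xtmk * xm \<le> N * c * a * b * etmk * xm"
    unfolding xtmk_eq using e x by (simp add: algebra_simps)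
  moreover have "xtm * xmk - N * c * a * b * etmk * xm = N * N * c * (1 - c) * a * a * b * (1 - b) * ((1 - pm) * pt * pk)"
    unfolding xtm_eq xmk_eq xm_eq etm_def emk_def etmk_def by (simp add: algebra_simps)
  moreover have "0 \<le> N * N * c * (1 - c) * a * a * b * (1 - b) * ((1 - pm) * pt * pk)"
    using \<open>0 < N\<close> u p by simp
  ultimately have mono_m: "0 \<le> xtm * xmk - xtmk * xm" by linarith
  have "xtmk * xk \<le> N * c * a * b * etmk * xk"
    unfolding xtmk_eq using e x by (simp add: algebra_simps)
  moreover have "xtk * xmk - N * c * a * b * etmk * xk = N * N * c * (1 - c) * a * b * b * (1 - a) * ((1 - pk) * pt * pm)"
    unfolding xtk_eq xmk_eq xk_eq etk_def emk_def etmk_def by (simp add: algebra_simps)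
  moreover have "0 \<le> N * N * c * (1 - c) * a * b * b * (1 - a) * ((1 - pk) * pt * pm)"
    using \<open>0 < N\<close> u p by simp
  ultimately have mono_k: "0 \<le> xtk * xmk - xtmk * xk" by linarith
  \<comment> \<open>pairing each internal type i with each outgoing type j, the difference is the sum
    of x_i x_j (w_i - w_j)\<close>
  have "Bq * C - B * Cq = xt * xm * (1 - qm) + xt * xk * (1 - qk)
      + (xt * xmk * (1 - qm * qk) + (qm - qk) * (xtm * xk - xtk * xm))
      + qm * (1 - qk) * (xtm * xmk - xtmk * xm) + qk * (1 - qm) * (xtk * xmk - xtmk * xk)"
    unfolding B_def C_def Bq_def Cq_def by (simp add: algebra_simps)
  also have "\<dots> > 0"
  proof -
    have "0 \<le> xt * xm * (1 - qm)" "0 \<le> xt * xk * (1 - qk)"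
      "0 \<le> qm * (1 - qk) * (xtm * xmk - xtmk * xm)" "0 \<le> qk * (1 - qm) * (xtk * xmk - xtmk * xk)"
      using x q mono_m mono_k by simp_all
    then show ?thesis using mixing_pos by linarith
  qed
  finally have "B * Cq < Bq * C" by simp
  then show "B / (B + C) < Bq / (Bq + Cq)"
    using \<open>0 < B + C\<close> \<open>0 < Bq + Cq\<close> by (simp add: divide_simps algebra_simps)
qed

lemma sum_subsets_three:
  assumes "Ls = {t, m, k}" "t \<noteq> m" "t \<noteq> k" "m \<noteq> k"
  shows "(\<Sum>T\<in>{T. T \<subseteq> Ls \<and> t \<in> T}. f T) = f {t} + f {t, m} + f {t, k} + f {t, m, k}"
    and "(\<Sum>T\<in>{T. T \<subseteq> Ls \<and> t \<notin> T}. f T) = f {} + f {m} + f {k} + f {m, k}"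
proof -
  have "finite Ls" "t \<in> Ls" "Ls - {t} = {m, k}" using assms by auto
  then show "(\<Sum>T\<in>{T. T \<subseteq> Ls \<and> t \<in> T}. f T) = f {t} + f {t, m} + f {t, k} + f {t, m, k}"
    by (simp only: sum_subsets_containing sum_Pow_doubleton[OF assms(4)])
  have "{T. T \<subseteq> Ls \<and> t \<notin> T} = Pow {m, k}" using assms by blast
  then show "(\<Sum>T\<in>{T. T \<subseteq> Ls \<and> t \<notin> T}. f T) = f {} + f {m} + f {k} + f {m, k}"
    by (simp only: sum_Pow_doubleton[OF assms(4)])
qed

lemma retention_bounds_standing:
  fixes Ls :: "nat set" and n :: nat and nc :: "nat \<Rightarrow> nat" and p :: "nat \<Rightarrow> real"
  assumes Ls: "finite Ls" "3 \<le> card Ls" "l \<in> Ls"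
    and nc: "\<forall>j\<in>Ls. 4 \<le> nc j" and p: "\<forall>j\<in>Ls. 1/20 \<le> p j \<and> p j \<le> 1"
    and n: "2 * (\<Prod>j\<in>Ls. nc j) \<le> n"
  shows "0 \<le> retention Ls n nc p l \<and> retention Ls n nc p l < 1"
proof -
  have "(4::nat) ^ 2 \<le> 4 ^ card (Ls - {l})"
    using Ls by (intro power_increasing) auto
  also have "\<dots> \<le> (\<Prod>j\<in>Ls - {l}. nc j)"
    using nc prod_mono[of "Ls - {l}" "\<lambda>_. 4 :: nat" nc] by simp
  finally have "nc l * 16 \<le> (\<Prod>j\<in>Ls. nc j)"
    using prod.remove[OF Ls(1,3), of nc] by simp
  then have "real (nc l) * 32 \<le> real n" using n by linarith
  moreover have "0 < real (nc l)" using nc Ls by force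
  ultimately have "32 \<le> real n / real (nc l)" by (simp add: le_divide_eq)
  moreover have "1/20 \<le> p l" using p Ls by simp
  ultimately have "32 * (1/20) \<le> real n / real (nc l) * p l"
    by (intro mult_mono) auto
  then have "1 < real n / real (nc l) * p l" by linarith
  moreover have "\<forall>j\<in>Ls. 1 < nc j" "\<forall>j\<in>Ls. 0 \<le> p j \<and> p j \<le> 1" using nc p by force+
  ultimately show ?thesis using retention_bounds[OF Ls(1,3)] by blast
qed

lemma reduce_weight_increases_layer_modularity:
  fixes Ls :: "nat set" and n :: nat and nc :: "nat \<Rightarrow> nat" and p :: "nat \<Rightarrow> real"
  assumes Ls: "Ls = {t, m, k}" "t \<noteq> m" "t \<noteq> k" "m \<noteq> k"
    and nc: "\<forall>l\<in>Ls. 4 \<le> nc l" and p: "\<forall>l\<in>Ls. 1/20 \<le> p l \<and> p l \<le> 1"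
    and n: "2 * (\<Prod>l\<in>Ls. nc l) \<le> n"
  shows "layer_modularity Ls n nc p (\<lambda>_. 1) t
    < layer_modularity Ls n nc p (reduced_weight Ls n nc p (Ls - {t})) t"
proof -
  have fin: "finite Ls" "3 \<le> card Ls" using Ls by auto
  define qm where "qm = retention Ls n nc p m"
  define qk where "qk = retention Ls n nc p k"
  have q: "0 \<le> qm" "qm < 1" "0 \<le> qk" "qk < 1"
    using retention_bounds_standing[OF fin _ nc p n] Ls by (auto simp: qm_def qk_def)
  define N where "N = real n"
  define c where "c = 1 / real (nc t)"
  define a where "a = 1 / real (nc m)"
  define b where "b = 1 / real (nc k)"
  have u: "0 < c" "c < 1" "0 < a" "a < 1" "0 < b" "b < 1"
    unfolding c_def a_def b_def using nc Ls by auto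
  have "2 * real (nc t) * real (nc m) * real (nc k) \<le> real n"
    using n Ls by (simp add: mult.assoc flip: of_nat_mult)
  then have "1 \<le> N * c * a * b"
    using nc Ls unfolding N_def c_def a_def b_def by (simp add: field_simps)
  let ?x = "\<lambda>T. share_exact Ls n nc T * edge_prob p T"
  have "{t, m} \<noteq> Ls" "{t, k} \<noteq> Ls" "{m, k} \<noteq> Ls" using Ls by auto
  then have masses: "?x {t} = N * c * (1 - a) * (1 - b) * p t"
    "?x {t, m} = N * c * a * (1 - b) * (1 - (1 - p t) * (1 - p m))"
    "?x {t, k} = N * c * (1 - a) * b * (1 - (1 - p t) * (1 - p k))"
    "?x {t, m, k} = (N * c * a * b - 1) * (1 - (1 - p t) * ((1 - p m) * (1 - p k)))"
    "?x {m} = N * (1 - c) * a * (1 - b) * p m"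
    "?x {k} = N * (1 - c) * (1 - a) * b * p k"
    "?x {m, k} = N * (1 - c) * a * b * (1 - (1 - p m) * (1 - p k))"
    using Ls by (simp_all add: share_exact_eq edge_prob_def insert_Diff_if N_def c_def a_def b_def)
  have "Ls - {t} = {m, k}" using Ls by auto
  then have weights: "reduced_weight Ls n nc p (Ls - {t}) {t} = 1"
    "reduced_weight Ls n nc p (Ls - {t}) {t, m} = qm"
    "reduced_weight Ls n nc p (Ls - {t}) {t, k} = qk"
    "reduced_weight Ls n nc p (Ls - {t}) {t, m, k} = qm * qk"
    "reduced_weight Ls n nc p (Ls - {t}) {m} = qm"
    "reduced_weight Ls n nc p (Ls - {t}) {k} = qk"
    "reduced_weight Ls n nc p (Ls - {t}) {m, k} = qm * qk"
    using Ls by (simp_all add: reduced_weight_def qm_def qk_def insert_Diff_if)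
  have "0 < p t" "p t \<le> 1" "0 < p m" "p m \<le> 1" "0 < p k" "p k \<le> 1"
    using p Ls by (auto intro: less_le_trans[of 0 "1/20"])
  note gain = internal_share_increases[OF \<open>1 \<le> N * c * a * b\<close> u this q masses]
  have "0 < nc t" "0 < n"
    using nc Ls \<open>1 \<le> N * c * a * b\<close> by (auto simp: N_def intro: gr0I)
  note modularity = layer_modularity_eq[where Ls = Ls and n = n and nc = nc and p = p and t = t,
      OF fin(1) this]
  show ?thesis
    using gain modularity[of "\<lambda>_. 1"] modularity[of "reduced_weight Ls n nc p (Ls - {t})"]
    unfolding sum_subsets_three[OF Ls] masses weights by (simp add: edge_prob_def)
qed

theorem theorem15:
  fixes n :: nat and nc :: "nat \<Rightarrow> nat" and p :: "nat \<Rightarrow> real" and t :: nat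
  assumes "\<forall>l<3. nc l \<ge> 4"
    and "\<forall>l<3. 0.05 \<le> p l \<and> p l \<le> 1"
    and "n \<ge> 2 * (\<Prod>l<3. nc l)"
    and "t < 3"
  shows "layer_modularity {..<3} n nc p (reduced_weight {..<3} n nc p ({..<3} - {t})) t
         > layer_modularity {..<3} n nc p (\<lambda>_. 1) t"
proof -
  obtain m k where layers: "{..<3} = {t, m, k}" "t \<noteq> m" "t \<noteq> k" "m \<noteq> k"
  proof -
    have "t = 0 \<or> t = 1 \<or> t = 2" using assms(4) by auto
    moreover have "{..<3} = {0, 1, 2 :: nat}" "{..<3} = {1, 0, 2 :: nat}" "{..<3} = {2, 0, 1 :: nat}"
      by auto
    ultimately show ?thesis using that by fastforce
  qed
  show ?thesis
    using reduce_weight_increases_layer_modularity[OF layers] assms(1-3) by simp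
qed

end
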